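(* Let $\Sigma$ be a finite alphabet, $m\ge 1$, $S\in\Sigma^m$, and let $f:\Sigma^m\to\mathbb{N}$ and $g:\Sigma^m\to\{1,\dots,m\}$ be the cost and shift functions of a window-based pattern matching algorithm $\mathcal{A}$ for pattern $S$. Let $\mathcal{D}$ be the DAA encoding $\mathcal{A}$ (defined in the context), and let $\mathcal{D}'$ be the DAA obtained from the general construction scheme (defined in the context) using a set of window representatives $\mathcal{R}$ of length $m$ that is compatible with $\mathcal{A}$ and $S$, together with an associated transition function $\delta_\mathcal{R}$. Then for every $n\ge 0$ and every text $T\in\Sigma^n$, the value computed by $\mathcal{D}$ on $T$ equals the value computed by $\mathcal{D}'$ on $T$.
   Context: A deterministic arithmetic automaton (DAA) consists of a finite state set $\mathcal{Q}$, a start state $q_0$, a transition function $\delta:\mathcal{Q}\times\Sigma\to\mathcal{Q}$, a start value $v_0=0\in\mathbb{N}$, and for each state $q$ an emission $\eta_q\in\mathbb{N}$; the value update is addition. Reading a character $\sigma$ in state $q$ with value $v$ moves to state $q'=\delta(q,\sigma)$ with value $v+\eta_{q'}$. Starting from $(q_0,0)$ and reading $T$ character by character, the value reached after reading all of $T$ is the value computed by the DAA on $T$. DAA encoding $\mathcal{A}$: states $\Sigma^m\times\{0,\dots,m\}$, start state $(S,m)$; $\delta((w,k),\sigma)=(w_1\cdots w_{m-1}\sigma,\,k-1)$ if $k>0$, and $=(w_1\cdots w_{m-1}\sigma,\,g(w)-1)$ if $k=0$ (where $w=w_0\cdots w_{m-1}$); emission $\eta_{(w,k)}=0$ if $k>0$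 and $\eta_{(w,k)}=f(w)$ if $k=0$. Representatives: for a finite set $\mathcal{R}\subset\Sigma^*$ and $a\in\Sigma^m$, $\mathrm{rep}_\mathcal{R}(a)$ is the longest suffix of $a$ (suffixes include the empty string $\varepsilon$ and $a$ itself) that lies in $\mathcal{R}$. $\mathcal{R}$ is a set of window representatives of length $m$ if (1) every $a\in\Sigma^m$ has a suffix in $\mathcal{R}$, and (2) there is $\delta_\mathcal{R}:\mathcal{R}\times\Sigma\to\mathcal{R}$ with $\delta_\mathcal{R}(\mathrm{rep}_\mathcal{R}(a),\sigma)=\mathrm{rep}_\mathcal{R}(a_1\cdots a_{m-1}\sigma)$ for all $a\in\Sigma^m,\sigma\in\Sigma$. It is compatible with $\mathcal{A}$ and $S$ if $f(a)=f(a')$ and $g(a)=g(a')$ whenever $\mathrm{rep}_\mathcal{R}(a)=\mathrm{rep}_\mathcal{R}(a')$; then for $r$ in the image of $\mathrm{rep}_\mathcal{R}$ set $f(r)=f(a)$, $g(r)=g(a)$ for any $a$ with $\mathrm{rep}_\mathcal{R}(a)=r$. General construction scheme: states $\mathcal{R}\times\{0,\dots,m\}$, start state $(\mathrm{rep}_\mathcal{R}(S),m)$; $\delta((r,k),\sigma)=(\delta_\mathcal{R}(r,\sigma),k-1)$ if $k>0$ and $=(\delta_\mathcal{R}(r,\sigma),g(r)-1)$ if $k=0$; emission $\eta_{(r,k)}=0$ if $k>0$ and $\eta_{(r,k)}=f(r)$ if $k=0$. *)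

theory Defs
  imports Main
begin

text \<open>Deterministic arithmetic automaton with additive value update, start value 0.
  Reading character c in state q with value v moves to (delta q c, v + eta (delta q c)).\<close>
definition daa_step :: "('q \<Rightarrow> 'a \<Rightarrow> 'q) \<Rightarrow> ('q \<Rightarrow> nat) \<Rightarrow> 'q \<times> nat \<Rightarrow> 'a \<Rightarrow> 'q \<times> nat" where
  "daa_step delta eta qv c = (let q' = delta (fst qv) c in (q', snd qv + eta q'))"

definition daa_value :: "'q \<Rightarrow> ('q \<Rightarrow> 'a \<Rightarrow> 'q) \<Rightarrow> ('q \<Rightarrow> nat) \<Rightarrow> 'a list \<Rightarrow> nat" where
  "daa_value q0 delta eta T = snd (foldl (daa_step delta eta) (q0, 0) T)"

definition windows :: "'a set \<Rightarrow> nat \<Rightarrow> 'a list set" where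
  "windows Al m = {w. length w = m \<and> set w \<subseteq> Al}"

text \<open>Longest suffix of a lying in R (suffixes are drop i a, i \<le> length a;
  longest = smallest i).\<close>
definition rep :: "'a list set \<Rightarrow> 'a list \<Rightarrow> 'a list" where
  "rep R a = drop (LEAST i. i \<le> length a \<and> drop i a \<in> R) a"

definition window_reps :: "'a set \<Rightarrow> nat \<Rightarrow> 'a list set \<Rightarrow> ('a list \<Rightarrow> 'a \<Rightarrow> 'a list) \<Rightarrow> bool" where
  "window_reps Al m R dR \<longleftrightarrow>
     finite R \<and> R \<subseteq> lists Al \<and>
     (\<forall>a\<in>windows Al m. \<exists>i\<le>length a. drop i a \<in> R) \<and>
     (\<forall>r\<in>R. \<forall>c\<in>Al. dR r c \<in> R) \<and>
     (\<forall>a\<in>windows Al m. \<forall>c\<in>Al. dR (rep R a) c = rep R (tl a @ [c]))"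

definition compatible :: "'a set \<Rightarrow> nat \<Rightarrow> 'a list set \<Rightarrow> ('a list \<Rightarrow> nat) \<Rightarrow> ('a list \<Rightarrow> nat) \<Rightarrow> bool" where
  "compatible Al m R f g \<longleftrightarrow>
     (\<forall>a\<in>windows Al m. \<forall>a'\<in>windows Al m.
        rep R a = rep R a' \<longrightarrow> f a = f a' \<and> g a = g a')"

definition lift_rep :: "'a set \<Rightarrow> nat \<Rightarrow> 'a list set \<Rightarrow> ('a list \<Rightarrow> nat) \<Rightarrow> 'a list \<Rightarrow> nat" where
  "lift_rep Al m R h r = h (SOME a. a \<in> windows Al m \<and> rep R a = r)"

text \<open>DAA encoding A: states (w,k), w a window, k \<in> {0..m}.  w_1...w_{m-1}c = tl w @ [c].\<close>
definition enc_delta :: "('a list \<Rightarrow> nat) \<Rightarrow> 'a list \<times> nat \<Rightarrow> 'a \<Rightarrow> 'a list \<times> nat" where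
  "enc_delta g s c = (case s of (w, k) \<Rightarrow>
     (tl w @ [c], if k > 0 then k - 1 else g w - 1))"

definition enc_eta :: "('a list \<Rightarrow> nat) \<Rightarrow> 'a list \<times> nat \<Rightarrow> nat" where
  "enc_eta f s = (case s of (w, k) \<Rightarrow> if k > 0 then 0 else f w)"

definition gen_delta :: "('a list \<Rightarrow> 'a \<Rightarrow> 'a list) \<Rightarrow> ('a list \<Rightarrow> nat) \<Rightarrow> 'a list \<times> nat \<Rightarrow> 'a \<Rightarrow> 'a list \<times> nat" where
  "gen_delta dR gR s c = (case s of (r, k) \<Rightarrow>
     (dR r c, if k > 0 then k - 1 else gR r - 1))"

definition gen_eta :: "('a list \<Rightarrow> nat) \<Rightarrow> 'a list \<times> nat \<Rightarrow> nat" where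
  "gen_eta fR s = (case s of (r, k) \<Rightarrow> if k > 0 then 0 else fR r)"

end

theory Submission
  imports Defs
begin

text \<open>The map (w, k) \<mapsto> (rep R w, k) is a simulation of the encoding automaton by the
  constructed one: the window representatives follow the shifted windows by the defining
  property of dR, and compatibility makes the lifted cost and shift functions agree with f and g
  on every window.\<close>

lemma daa_foldl_simulation:
  assumes closed: "\<And>q c. P q \<Longrightarrow> c \<in> A \<Longrightarrow> P (delta q c)"
    and delta_sim: "\<And>q c. P q \<Longrightarrow> c \<in> A \<Longrightarrow> delta' (h q) c = h (delta q c)"
    and eta_sim: "\<And>q c. P q \<Longrightarrow> c \<in> A \<Longrightarrow> eta' (h (delta q c)) = eta (delta q c)"
    and "set T \<subseteq> A" "P q"
  shows "foldl (daa_step delta' eta') (h q, v) T = apfst h (foldl (daa_step delta eta) (q, v) T)"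
  using assms(4,5)
proof (induction T arbitrary: q v)
  case Nil
  then show ?case by simp
next
  case (Cons c T)
  then have c: "c \<in> A" and T: "set T \<subseteq> A" by simp_all
  let ?q' = "delta q c" and ?v' = "v + eta (delta q c)"
  have "daa_step delta' eta' (h q, v) c = (h ?q', ?v')"
    using Cons.prems(2) c delta_sim eta_sim by (simp add: daa_step_def Let_def)
  moreover have "daa_step delta eta (q, v) c = (?q', ?v')"
    by (simp add: daa_step_def Let_def)
  ultimately show ?case
    using Cons.IH[OF T closed[OF Cons.prems(2) c]] by simp
qed

lemma daa_value_simulation:
  assumes "\<And>q c. P q \<Longrightarrow> c \<in> A \<Longrightarrow> P (delta q c)"
    and "\<And>q c. P q \<Longrightarrow> c \<in> A \<Longrightarrow> delta' (h q) c = h (delta q c)"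
    and "\<And>q c. P q \<Longrightarrow> c \<in> A \<Longrightarrow> eta' (h (delta q c)) = eta (delta q c)"
    and "set T \<subseteq> A" "P q0"
  shows "daa_value (h q0) delta' eta' T = daa_value q0 delta eta T"
  using daa_foldl_simulation[of P A delta delta' h eta' eta T q0 0, OF assms]
  by (simp add: daa_value_def apfst_def map_prod_def split_beta)

lemma tl_append_in_windows:
  "w \<in> windows Al m \<Longrightarrow> 1 \<le> m \<Longrightarrow> c \<in> Al \<Longrightarrow> tl w @ [c] \<in> windows Al m"
  unfolding windows_def by (cases w) auto

lemma lift_rep_rep:
  assumes "\<forall>a\<in>windows Al m. \<forall>a'\<in>windows Al m. rep R a = rep R a' \<longrightarrow> h a = h a'"
    and "w \<in> windows Al m"
  shows "lift_rep Al m R h (rep R w) = h w"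
proof -
  let ?a = "SOME a. a \<in> windows Al m \<and> rep R a = rep R w"
  have "?a \<in> windows Al m \<and> rep R ?a = rep R w"
    by (rule someI_ex) (use assms(2) in blast)
  with assms show ?thesis unfolding lift_rep_def by blast
qed

theorem theorem15:
  fixes Al :: "'a set" and m :: nat and S :: "'a list"
    and f g :: "'a list \<Rightarrow> nat"
    and R :: "'a list set" and dR :: "'a list \<Rightarrow> 'a \<Rightarrow> 'a list"
    and T :: "'a list"
  assumes "finite Al"
    and "m \<ge> 1"
    and "S \<in> windows Al m"
    and "\<forall>w\<in>windows Al m. 1 \<le> g w \<and> g w \<le> m"
    and "window_reps Al m R dR"
    and "compatible Al m R f g"
    and "set T \<subseteq> Al"
  shows "daa_value (S, m) (enc_delta g) (enc_eta f) T =
         daa_value (rep R S, m) (gen_delta dR (lift_rep Al m R g)) (gen_eta (lift_rep Al m R f)) T"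
proof -
  let ?P = "\<lambda>(w, k). w \<in> windows Al m"
  let ?h = "\<lambda>(w, k). (rep R w, k)"
  have shift: "tl w @ [c] \<in> windows Al m" if "w \<in> windows Al m" "c \<in> Al" for w c
    using tl_append_in_windows[OF that(1) \<open>m \<ge> 1\<close> that(2)] .
  have dR: "dR (rep R w) c = rep R (tl w @ [c])" if "w \<in> windows Al m" "c \<in> Al" for w c
    using assms(5) that unfolding window_reps_def by blast
  have lift_f: "lift_rep Al m R f (rep R w) = f w"
    and lift_g: "lift_rep Al m R g (rep R w) = g w" if "w \<in> windows Al m" for w
    using lift_rep_rep[OF _ that] assms(6) unfolding compatible_def by blast+
  have "daa_value (?h (S, m)) (gen_delta dR (lift_rep Al m R g)) (gen_eta (lift_rep Al m R f)) T
      = daa_value (S, m) (enc_delta g) (enc_eta f) T"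
    by (rule daa_value_simulation[where P = ?P and A = Al])
      (auto simp: enc_delta_def gen_delta_def enc_eta_def gen_eta_def
        shift dR lift_f lift_g assms(3,7))
  then show ?thesis by simp
qed

end
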